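(* Let $K$ be a positive integer, $\Delta x=2\pi/K$, and consider vectors $u=(u_1,\dots,u_K)^\top$ extended periodically by $u_{k+K}=u_k$. Let $\bar g_k,\bar f_k:\mathbb{R}^K\to\mathbb{R}$ ($k\in\mathbb{Z}$, with $\bar g_{k+K}=\bar g_k$, $\bar f_{k+K}=\bar f_k$) be differentiable maps. Suppose the initial value $u(0)$ satisfies $\sum_{k=1}^K\bar f_k(u(0))=0$. Let $u:[0,T)\to\mathbb{R}^K$ be a solution of the initial value problem for the average-difference method $$\delta_x^+\big(\dot u_k+\bar g_k(u)\big)=\mu_x^+\bar f_k(u)\qquad(k=1,\dots,K)$$ satisfying $\sum_{j=1}^K\sum_{k=1}^K\frac{\partial\bar f_j}{\partial u_k}(u(t))\neq0$ for all $t\in(0,T)$. Then $u$ is also a solution of $$\dot u_k+\bar g_k(u)=\delta^{-1}_{\mathrm{FD}}\bar f_k(u)+\mathcal{C}_{\mathrm d}(u)\qquad(k=1,\dots,K),$$ where $$\mathcal{C}_{\mathrm d}(u)=\frac{\sum_{j=1}^K\sum_{k=1}^K\frac{\partial\bar f_j}{\partial u_k}(u)\big(\bar g_k(u)-\delta^{-1}_{\mathrm{FD}}\bar f_k(u)\big)}{\sum_{j=1}^K\sum_{k=1}^K\frac{\partial\bar f_j}{\partial u_k}(u)}.$$ Conversely, a solution $u$ of the initial value problem for the latter equation satisfies the average-difference method equation.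
   Context: Here $\dot u_k=\mathrm{d}u_k/\mathrm{d}t$. The forward difference and forward average operators are $\delta_x^+w_k=(w_{k+1}-w_k)/\Delta x$ and $\mu_x^+w_k=(w_k+w_{k+1})/2$ (indices taken periodically). For a periodic sequence $w$ (so $w_0=w_K$), the discrete operator $\delta^{-1}_{\mathrm{FD}}$ is $$\delta^{-1}_{\mathrm{FD}}w_k=\Big(\frac{w_0}{2}+\sum_{i=1}^{k-1}w_i+\frac{w_k}{2}\Big)\Delta x-\frac{1}{2\pi}\sum_{i=1}^K\Big(\frac{w_0}{2}+\sum_{j=1}^{i-1}w_j+\frac{w_i}{2}\Big)(\Delta x)^2,$$ and $\delta^{-1}_{\mathrm{FD}}\bar f_k(u)$ means $\delta^{-1}_{\mathrm{FD}}$ applied to the sequence $(\bar f_k(u))_k$ and evaluated at index $k$. *)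

theory Defs
  imports "HOL-Analysis.Analysis"
begin

text \<open>The space R^K is modelled as real^'n with 'n an enumerable finite type,
  K = CARD('n). The coordinates are ordered by the list Enum.enum, and the
  integer index k is taken periodically modulo K (k = 1..K are the coordinates).\<close>

definition idx :: "int \<Rightarrow> 'n::enum" where
  "idx k = (Enum.enum :: 'n list) ! nat ((k - 1) mod int CARD('n))"

definition cmp :: "real^('n::enum) \<Rightarrow> int \<Rightarrow> real" where
  "cmp x k = x $ idx k"

definition dx :: "nat \<Rightarrow> real" where
  "dx K = 2 * pi / real K"

definition fwd_diff :: "nat \<Rightarrow> (int \<Rightarrow> real) \<Rightarrow> int \<Rightarrow> real" where
  "fwd_diff K w k = (w (k + 1) - w k) / dx K"

definition fwd_avg :: "(int \<Rightarrow> real) \<Rightarrow> int \<Rightarrow> real" where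
  "fwd_avg w k = (w k + w (k + 1)) / 2"

definition cumtrap :: "nat \<Rightarrow> (int \<Rightarrow> real) \<Rightarrow> int \<Rightarrow> real" where
  "cumtrap K w k = (w 0 / 2 + (\<Sum>i=1..k-1. w i) + w k / 2) * dx K"

definition dinv_FD :: "nat \<Rightarrow> (int \<Rightarrow> real) \<Rightarrow> int \<Rightarrow> real" where
  "dinv_FD K w k = cumtrap K w k
     - (1 / (2 * pi)) * (\<Sum>i=1..int K. (w 0 / 2 + (\<Sum>j=1..i-1. w j) + w i / 2) * (dx K)\<^sup>2)"

definition pdiff :: "(real^('n::enum) \<Rightarrow> real) \<Rightarrow> int \<Rightarrow> real^('n::enum) \<Rightarrow> real" where
  "pdiff F k x = frechet_derivative F (at x) (axis (idx k) 1)"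

definition Cd :: "(int \<Rightarrow> real^('n::enum) \<Rightarrow> real) \<Rightarrow> (int \<Rightarrow> real^('n::enum) \<Rightarrow> real) \<Rightarrow> real^('n::enum) \<Rightarrow> real" where
  "Cd g f x =
     (\<Sum>j=1..int CARD('n::enum). \<Sum>k=1..int CARD('n::enum).
        pdiff (f j) k x * (g k x - dinv_FD CARD('n::enum) (\<lambda>i. f i x) k))
     / (\<Sum>j=1..int CARD('n::enum). \<Sum>k=1..int CARD('n::enum). pdiff (f j) k x)"

end

theory Submission imports Defs begin

text \<open>On one period, the average-difference equations say that u' + g minus the trapezoidal
  antiderivative of f is constant, while the wrap-around step forces sum_k f_k(u) = 0; this is
  exactly the dinv form with some free constant c plus the conservation of sum_k f_k(u).
  Differentiating sum_k f_k(u(t)) in t gives c times the sum of all partial derivatives of the f_j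
  minus the numerator of Cd, so under the nondegeneracy hypothesis conservation holds iff c = Cd;
  conversely the Cd form conserves the sum, which starts at 0.\<close>

lemma sum_int_atLeastAtMost_plus1:
  "(k::int) \<ge> 0 \<Longrightarrow> (\<Sum>i=1..k+1. w i) = (\<Sum>i=1..k. w i) + (w (k+1) :: real)"
  using atLeastAtMostPlus1_int_conv[of 1 k] by (simp add: add.commute)

lemma ex_const_on_int_interval_iff:
  fixes e :: "int \<Rightarrow> 'a"
  shows "(\<exists>c. \<forall>k\<in>{a..b}. e k = c) \<longleftrightarrow> (\<forall>k\<in>{a..<b}. e (k + 1) = e k)"
proof
  assume "\<exists>c. \<forall>k\<in>{a..b}. e k = c"
  then obtain c where c: "\<forall>k\<in>{a..b}. e k = c" by blast
  show "\<forall>k\<in>{a..<b}. e (k + 1) = e k"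
  proof
    fix k assume "k \<in> {a..<b}"
    then have "k \<in> {a..b}" "k + 1 \<in> {a..b}" by auto
    with c show "e (k + 1) = e k" by simp
  qed
next
  assume steps: "\<forall>k\<in>{a..<b}. e (k + 1) = e k"
  have "k \<le> b \<longrightarrow> e k = e a" if "k \<ge> a" for k
    using that
  proof (induction k rule: int_ge_induct)
    case (step k)
    show ?case
    proof
      assume "k + 1 \<le> b"
      then have "e (k + 1) = e k" using step.hyps by (intro steps[rule_format]) simp
      then show "e (k + 1) = e a" using step.IH \<open>k + 1 \<le> b\<close> by simp
    qed
  qed simp
  then show "\<exists>c. \<forall>k\<in>{a..b}. e k = c" by (meson atLeastAtMost_iff)
qed

lemma dx_neq_0: "K \<ge> 1 \<Longrightarrow> dx K \<noteq> 0"
  unfolding dx_def by simp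

lemma fwd_diff_eq_fwd_avg_iff:
  "K \<ge> 1 \<Longrightarrow> fwd_diff K v k = fwd_avg w k \<longleftrightarrow> v (k + 1) - v k = (w k + w (k + 1)) / 2 * dx K"
  using dx_neq_0[of K] unfolding fwd_diff_def fwd_avg_def by (simp add: divide_eq_eq)

lemma cumtrap_step:
  assumes "k \<ge> 1"
  shows "cumtrap K w (k + 1) - cumtrap K w k = (w k + w (k + 1)) / 2 * dx K"
proof -
  have "(\<Sum>i=1..k. w i) = (\<Sum>i=1..k-1. w i) + w k"
    using sum_int_atLeastAtMost_plus1[of "k - 1" w] assms by simp
  then show ?thesis unfolding cumtrap_def by (simp add: algebra_simps)
qed

lemma cumtrap_wrap:
  assumes "K \<ge> 1" and "w 0 = w (int K)"
  shows "cumtrap K w 1 - cumtrap K w (int K)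
           = (w (int K) + w 1) / 2 * dx K - (\<Sum>i=1..int K. w i) * dx K"
proof -
  have "(\<Sum>i=1..int K. w i) = (\<Sum>i=1..int K - 1. w i) + w (int K)"
    using sum_int_atLeastAtMost_plus1[of "int K - 1" w] assms(1) by simp
  then show ?thesis unfolding cumtrap_def using assms(2) by (simp add: algebra_simps)
qed

lemma dinv_FD_eq_cumtrap_plus_const:
  "dinv_FD K w k = cumtrap K w k + (dinv_FD K w j - cumtrap K w j)"
  unfolding dinv_FD_def by simp

lemma fwd_diff_eq_fwd_avg_iff_dinv_FD:
  fixes v w :: "int \<Rightarrow> real"
  assumes K: "K \<ge> 1" and w_per: "\<forall>k. w (k + int K) = w k" and v_per: "\<forall>k. v (k + int K) = v k"
  shows "(\<forall>k\<in>{1..int K}. fwd_diff K v k = fwd_avg w k)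
           \<longleftrightarrow> (\<Sum>i=1..int K. w i) = 0 \<and> (\<exists>c. \<forall>k\<in>{1..int K}. v k = dinv_FD K w k + c)"
proof -
  define e where "e k = v k - cumtrap K w k" for k
  have shift: "(\<exists>c. \<forall>k\<in>{1..int K}. e k = c) \<longleftrightarrow> (\<exists>c. \<forall>k\<in>{1..int K}. v k = dinv_FD K w k + c)"
  proof -
    define d where "d = dinv_FD K w 1 - cumtrap K w 1"
    have "v k = dinv_FD K w k + c \<longleftrightarrow> e k = c + d" for k c
      unfolding e_def d_def dinv_FD_eq_cumtrap_plus_const[of K w k 1] by linarith
    then show ?thesis by (metis diff_add_cancel)
  qed
  have interior: "fwd_diff K v k = fwd_avg w k \<longleftrightarrow> e (k + 1) = e k" if "k \<in> {1..<int K}" for k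
    using that cumtrap_step[of k K w] fwd_diff_eq_fwd_avg_iff[OF K] unfolding e_def by auto
  have w0: "w 0 = w (int K)" and "w (int K + 1) = w 1" and "v (int K + 1) = v 1"
    using w_per[rule_format, of 0] w_per[rule_format, of 1] v_per[rule_format, of 1]
    by (simp_all add: add.commute)
  then have wrap: "fwd_diff K v (int K) = fwd_avg w (int K)
                     \<longleftrightarrow> e 1 - e (int K) = (\<Sum>i=1..int K. w i) * dx K"
    using cumtrap_wrap[OF K w0] fwd_diff_eq_fwd_avg_iff[OF K, of v "int K" w]
    unfolding e_def by auto
  have "{1..int K} = insert (int K) {1..<int K}" using K by auto
  then have "(\<forall>k\<in>{1..int K}. fwd_diff K v k = fwd_avg w k)
               \<longleftrightarrow> (\<forall>k\<in>{1..<int K}. e (k + 1) = e k) \<and> e 1 - e (int K) = (\<Sum>i=1..int K. w i) * dx K"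
    using interior wrap by auto
  also have "\<dots> \<longleftrightarrow> (\<exists>c. \<forall>k\<in>{1..int K}. e k = c) \<and> (\<Sum>i=1..int K. w i) = 0"
    unfolding ex_const_on_int_interval_iff[symmetric]
  proof -
    have "e 1 = e (int K)" if "\<exists>c. \<forall>k\<in>{1..int K}. e k = c"
      using that K by force
    then show "(\<exists>c. \<forall>k\<in>{1..int K}. e k = c) \<and> e 1 - e (int K) = (\<Sum>i=1..int K. w i) * dx K
        \<longleftrightarrow> (\<exists>c. \<forall>k\<in>{1..int K}. e k = c) \<and> (\<Sum>i=1..int K. w i) = 0"
      using dx_neq_0[OF K] by auto
  qed
  finally show ?thesis using shift by (simp only: conj_commute)
qed

lemma idx_add_CARD: "idx (k + int CARD('n::enum)) = (idx k :: 'n)"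
proof -
  have "(k + int CARD('n) - 1) mod int CARD('n) = (k - 1) mod int CARD('n)"
    by (metis add.commute add_diff_eq mod_add_self1)
  then show ?thesis unfolding idx_def by simp
qed

lemma cmp_add_CARD:
  fixes x :: "real^'n::enum"
  shows "cmp x (k + int CARD('n)) = cmp x k"
  unfolding cmp_def idx_add_CARD ..

lemma bij_betw_idx: "bij_betw (idx :: int \<Rightarrow> 'n::enum) {1..int CARD('n)} UNIV"
proof (rule bij_betw_imageI)
  have len: "length (Enum.enum :: 'n list) = CARD('n)" by (simp add: card_UNIV_length_enum)
  have idx_eq: "(idx k :: 'n) = Enum.enum ! nat (k - 1)" if "k \<in> {1..int CARD('n)}" for k
    using that unfolding idx_def by simp
  show "inj_on (idx :: int \<Rightarrow> 'n) {1..int CARD('n)}"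
  proof (rule inj_onI)
    fix k l assume k: "k \<in> {1..int CARD('n)}" and l: "l \<in> {1..int CARD('n)}"
      and "(idx k :: 'n) = idx l"
    then have "(Enum.enum :: 'n list) ! nat (k - 1) = Enum.enum ! nat (l - 1)"
      by (simp add: idx_eq)
    moreover have "nat (k - 1) < length (Enum.enum :: 'n list)" "nat (l - 1) < length (Enum.enum :: 'n list)"
      using k l len by auto
    ultimately have "nat (k - 1) = nat (l - 1)"
      using nth_eq_iff_index_eq[OF enum_distinct] by blast
    then show "k = l" using k l by (simp add: nat_eq_iff)
  qed
  show "(idx :: int \<Rightarrow> 'n) ` {1..int CARD('n)} = UNIV"
  proof (intro set_eqI iffI)
    fix n :: 'n
    obtain i where i: "i < length (Enum.enum :: 'n list)" "Enum.enum ! i = n"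
      by (metis UNIV_enum UNIV_I in_set_conv_nth)
    then have "int i + 1 \<in> {1..int CARD('n)}" "idx (int i + 1) = n"
      using len by (auto simp: idx_eq)
    then show "n \<in> idx ` {1..int CARD('n)}" by (metis image_eqI)
  qed simp
qed

lemma sum_idx_eq_sum_UNIV: "(\<Sum>k=1..int CARD('n::enum). h (idx k :: 'n)) = (\<Sum>n\<in>UNIV. h n)"
  using sum.reindex_bij_betw[OF bij_betw_idx, of h] by simp

lemma linear_eq_sum_cmp_axis:
  assumes "linear L"
  shows "L (y :: real^('n::enum)) = (\<Sum>k=1..int CARD('n). cmp y k * L (axis (idx k) 1))"
proof -
  have "L y = L (\<Sum>n\<in>UNIV. y $ n *s axis n 1)" by (simp add: basis_expansion)
  also have "\<dots> = (\<Sum>n\<in>UNIV. y $ n * L (axis n 1))"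
    using assms by (simp add: linear_sum linear_cmul vector_scalar_mult_def scalar_mult_eq_scaleR)
  also have "\<dots> = (\<Sum>k=1..int CARD('n). cmp y k * L (axis (idx k) 1))"
    unfolding cmp_def by (rule sum_idx_eq_sum_UNIV[symmetric])
  finally show ?thesis .
qed

lemma has_real_derivative_comp_sum_pdiff:
  fixes F :: "real^('n::enum) \<Rightarrow> real"
  assumes "F differentiable (at (u t))" and "(u has_vector_derivative u') (at t within S)"
  shows "((\<lambda>s. F (u s)) has_real_derivative (\<Sum>k=1..int CARD('n). pdiff F k (u t) * cmp u' k))
           (at t within S)"
proof -
  let ?F' = "frechet_derivative F (at (u t))"
  have DF: "(F has_derivative ?F') (at (u t))"
    using assms(1) frechet_derivative_works by blast
  have "((F \<circ> u) has_vector_derivative ?F' u') (at t within S)"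
    using vector_derivative_diff_chain_within[OF assms(2) has_derivative_at_withinI[OF DF]] .
  moreover have "?F' u' = (\<Sum>k=1..int CARD('n). pdiff F k (u t) * cmp u' k)"
    unfolding linear_eq_sum_cmp_axis[OF has_derivative_linear[OF DF], of u'] pdiff_def
    by (simp add: mult.commute)
  ultimately show ?thesis
    by (simp add: has_real_derivative_iff_has_vector_derivative comp_def)
qed

lemma vanishes_iff_derivative_vanishes:
  fixes S D :: "real \<Rightarrow> real"
  assumes deriv: "\<forall>t\<in>{0..<T}. (S has_real_derivative D t) (at t within {0..<T})"
    and S0: "S 0 = 0"
  shows "(\<forall>t\<in>{0<..<T}. S t = 0) \<longleftrightarrow> (\<forall>t\<in>{0<..<T}. D t = 0)"
proof -
  have deriv_at: "(S has_real_derivative D t) (at t)" if "t \<in> {0<..<T}" for t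
  proof -
    have "t \<in> {0..<T}" using that by simp
    then have "(S has_real_derivative D t) (at t within {0..<T})"
      using deriv by blast
    moreover have "at t within {0..<T} = at t" using that by (intro at_within_interior) simp
    ultimately show ?thesis by simp
  qed
  show ?thesis
  proof (intro iffI ballI)
    fix t assume zero: "\<forall>t\<in>{0<..<T}. S t = 0" and t: "t \<in> {0<..<T}"
    have "((\<lambda>_. 0) has_real_derivative D t) (at t)"
      by (rule has_field_derivative_transform_within_open[OF deriv_at[OF t] open_greaterThanLessThan t])
        (use zero in blast)
    then show "D t = 0" by (rule DERIV_unique[OF _ DERIV_const])
  next
    fix t assume D0: "\<forall>t\<in>{0<..<T}. D t = 0" and t: "t \<in> {0<..<T}"
    have "continuous_on {0..<T} S"
      by (rule DERIV_continuous_on) (use deriv in blast)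
    then have "continuous_on {0..t} S" by (rule continuous_on_subset) (use t in auto)
    moreover have "(S has_real_derivative 0) (at s)" if "0 < s" "s < t" for s
    proof -
      have "s \<in> {0<..<T}" using that t by simp
      then show ?thesis using deriv_at[of s] D0 by simp
    qed
    ultimately have "S t = S 0" using t by (intro DERIV_isconst_end) simp_all
    then show "S t = 0" using S0 by simp
  qed
qed

definition avg_diff_holds ::
    "(int \<Rightarrow> real^('n::enum) \<Rightarrow> real) \<Rightarrow> (int \<Rightarrow> real^('n::enum) \<Rightarrow> real) \<Rightarrow> real^('n::enum) \<Rightarrow> real^('n::enum) \<Rightarrow> bool"
  where "avg_diff_holds g f x y \<longleftrightarrow> (\<forall>k\<in>{1..int CARD('n)}.
           fwd_diff CARD('n) (\<lambda>i. cmp y i + g i x) k = fwd_avg (\<lambda>i. f i x) k)"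

definition dinv_form_holds ::
    "(int \<Rightarrow> real^('n::enum) \<Rightarrow> real) \<Rightarrow> (int \<Rightarrow> real^('n::enum) \<Rightarrow> real) \<Rightarrow> real \<Rightarrow> real^('n::enum) \<Rightarrow> real^('n::enum) \<Rightarrow> bool"
  where "dinv_form_holds g f c x y \<longleftrightarrow> (\<forall>k\<in>{1..int CARD('n)}.
           cmp y k + g k x = dinv_FD CARD('n) (\<lambda>i. f i x) k + c)"

definition total_rate :: "(int \<Rightarrow> real^('n::enum) \<Rightarrow> real) \<Rightarrow> real^('n::enum) \<Rightarrow> real^('n::enum) \<Rightarrow> real"
  where "total_rate f x y = (\<Sum>j=1..int CARD('n). \<Sum>k=1..int CARD('n). pdiff (f j) k x * cmp y k)"

lemma avg_diff_holds_iff_dinv_form: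
  fixes g f :: "int \<Rightarrow> real^('n::enum) \<Rightarrow> real"
  assumes "\<forall>k. g (k + int CARD('n)) = g k" and "\<forall>k. f (k + int CARD('n)) = f k"
  shows "avg_diff_holds g f x y
           \<longleftrightarrow> (\<Sum>k=1..int CARD('n). f k x) = 0 \<and> (\<exists>c. dinv_form_holds g f c x y)"
  unfolding avg_diff_holds_def dinv_form_holds_def
  by (rule fwd_diff_eq_fwd_avg_iff_dinv_FD) (simp_all add: card_ge_0_finite cmp_add_CARD assms)

lemma has_real_derivative_total_rate:
  fixes f :: "int \<Rightarrow> real^('n::enum) \<Rightarrow> real"
  assumes "\<forall>j. f j differentiable (at (u t))" and "(u has_vector_derivative u') (at t within S)"
  shows "((\<lambda>s. \<Sum>j=1..int CARD('n). f j (u s)) has_real_derivative total_rate f (u t) u')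
           (at t within S)"
  unfolding total_rate_def using assms
  by (intro DERIV_sum has_real_derivative_comp_sum_pdiff) auto

lemma total_rate_eq_0_iff_Cd:
  fixes g f :: "int \<Rightarrow> real^('n::enum) \<Rightarrow> real"
  assumes shift: "dinv_form_holds g f c x y"
    and den: "(\<Sum>j=1..int CARD('n). \<Sum>k=1..int CARD('n). pdiff (f j) k x) \<noteq> 0"
  shows "total_rate f x y = 0 \<longleftrightarrow> c = Cd g f x"
proof -
  let ?I = "{1..int CARD('n)}"
  let ?d = "dinv_FD CARD('n) (\<lambda>i. f i x)"
  define Den where "Den = (\<Sum>j\<in>?I. \<Sum>k\<in>?I. pdiff (f j) k x)"
  define N where "N = (\<Sum>j\<in>?I. \<Sum>k\<in>?I. pdiff (f j) k x * (g k x - ?d k))"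
  have "total_rate f x y = (\<Sum>j\<in>?I. \<Sum>k\<in>?I. c * pdiff (f j) k x - pdiff (f j) k x * (g k x - ?d k))"
    unfolding total_rate_def
  proof (intro sum.cong refl)
    fix j k assume "k \<in> ?I"
    then have cmp_eq: "cmp y k = ?d k + c - g k x"
      using shift unfolding dinv_form_holds_def by fastforce
    show "pdiff (f j) k x * cmp y k = c * pdiff (f j) k x - pdiff (f j) k x * (g k x - ?d k)"
      unfolding cmp_eq by (simp add: algebra_simps)
  qed
  also have "\<dots> = c * Den - N"
    unfolding Den_def N_def by (simp add: sum_subtractf sum_distrib_left)
  also have "c * Den - N = 0 \<longleftrightarrow> c = Cd g f x"
    using den unfolding Cd_def Den_def[symmetric] N_def[symmetric] by (simp add: eq_divide_eq)
  finally show ?thesis .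
qed

theorem mainTheorem6:
  fixes gbar fbar :: "int \<Rightarrow> real^('n::enum) \<Rightarrow> real"
    and u u' :: "real \<Rightarrow> real^('n::enum)" and T :: real
  assumes g_per: "\<forall>k. gbar (k + int CARD('n::enum)) = gbar k"
    and f_per: "\<forall>k. fbar (k + int CARD('n::enum)) = fbar k"
    and g_diff: "\<forall>k x. gbar k differentiable (at x)"
    and f_diff: "\<forall>k x. fbar k differentiable (at x)"
    and u_deriv: "\<forall>t\<in>{0..<T}. (u has_vector_derivative u' t) (at t within {0..<T})"
    and init: "(\<Sum>k=1..int CARD('n::enum). fbar k (u 0)) = 0"
    and nondeg: "\<forall>t\<in>{0<..<T}.
       (\<Sum>j=1..int CARD('n::enum). \<Sum>k=1..int CARD('n::enum). pdiff (fbar j) k (u t)) \<noteq> 0"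
  shows "((\<forall>t\<in>{0..<T}. \<forall>k\<in>{1..int CARD('n::enum)}.
             fwd_diff CARD('n::enum) (\<lambda>i. cmp (u' t) i + gbar i (u t)) k
               = fwd_avg (\<lambda>i. fbar i (u t)) k)
          \<longrightarrow> (\<forall>t\<in>{0<..<T}. \<forall>k\<in>{1..int CARD('n::enum)}.
             cmp (u' t) k + gbar k (u t)
               = dinv_FD CARD('n::enum) (\<lambda>i. fbar i (u t)) k + Cd gbar fbar (u t)))
       \<and> ((\<forall>t\<in>{0<..<T}. \<forall>k\<in>{1..int CARD('n::enum)}.
             cmp (u' t) k + gbar k (u t)
               = dinv_FD CARD('n::enum) (\<lambda>i. fbar i (u t)) k + Cd gbar fbar (u t))
          \<longrightarrow> (\<forall>t\<in>{0<..<T}. \<forall>k\<in>{1..int CARD('n::enum)}.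
             fwd_diff CARD('n::enum) (\<lambda>i. cmp (u' t) i + gbar i (u t)) k
               = fwd_avg (\<lambda>i. fbar i (u t)) k))"
proof -
  define S where "S t = (\<Sum>j=1..int CARD('n). fbar j (u t))" for t
  have "\<forall>t\<in>{0..<T}. (S has_real_derivative total_rate fbar (u t) (u' t)) (at t within {0..<T})"
    unfolding S_def using f_diff u_deriv by (blast intro: has_real_derivative_total_rate)
  then have conserved_iff: "(\<forall>t\<in>{0<..<T}. S t = 0) \<longleftrightarrow> (\<forall>t\<in>{0<..<T}. total_rate fbar (u t) (u' t) = 0)"
    by (rule vanishes_iff_derivative_vanishes) (use init S_def in simp)
  have AD_iff: "avg_diff_holds gbar fbar (u t) (u' t)
                  \<longleftrightarrow> S t = 0 \<and> (\<exists>c. dinv_form_holds gbar fbar c (u t) (u' t))" for t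
    unfolding S_def using g_per f_per by (rule avg_diff_holds_iff_dinv_form)
  have rate_iff: "total_rate fbar (u t) (u' t) = 0 \<longleftrightarrow> c = Cd gbar fbar (u t)"
    if "t \<in> {0<..<T}" and "dinv_form_holds gbar fbar c (u t) (u' t)" for t c
    using that nondeg by (intro total_rate_eq_0_iff_Cd) auto
  have "{0<..<T} \<subseteq> {0..<T}" by auto
  then have "((\<forall>t\<in>{0..<T}. avg_diff_holds gbar fbar (u t) (u' t))
               \<longrightarrow> (\<forall>t\<in>{0<..<T}. dinv_form_holds gbar fbar (Cd gbar fbar (u t)) (u t) (u' t)))
           \<and> ((\<forall>t\<in>{0<..<T}. dinv_form_holds gbar fbar (Cd gbar fbar (u t)) (u t) (u' t))
               \<longrightarrow> (\<forall>t\<in>{0<..<T}. avg_diff_holds gbar fbar (u t) (u' t)))"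
    using conserved_iff AD_iff rate_iff by blast
  then show ?thesis unfolding avg_diff_holds_def dinv_form_holds_def .
qed

end
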